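(* Let $k\ge2$, and let $\mathcal P=\{p_1,\dots,p_{k^2}\}$ be a family of homogeneous real polynomials in the commuting variables $x_1,\dots,x_{2k^2}$ admitting an nc representation $p(X,Y)$ of degree $d>1$. Let $a\ne b$ and suppose $x_i$ is the $(a,a)$ entry of $X$, $x_j$ is the $(a,b)$ entry of $X$, and $x_\ell$ is the $(b,b)$ entry of $X$. If $\varphi(n,0)\ne0$ for some $n\ge2$, then exactly one polynomial of the family contains the monomials $\varphi(n,0)x_i^{n-1}x_j$ and $\varphi(n,0)x_jx_\ell^{n-1}$, and this polynomial is in position $(a,b)$ of the array $p(X,Y)$.
   Context: The family $\mathcal P$ admits an nc representation $p(X,Y)$ if there are $k\times k$ matrices $X,Y$ whose $2k^2$ entries are the variables $x_1,\dots,x_{2k^2}$, each used exactly once, and a noncommutative polynomial $p$ in two letters with real coefficients such that the matrix $p(X,Y)$ is a $k\times k$ array whose entries are $p_1,\dots,p_{k^2}$, each exactly once. $\varphi(i,j)$ is the sum of coefficients of all monomials of $p$ of degree $i$ in $X$ and $j$ in $Y$. *)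

theory Defs
  imports Complex_Main "HOL-Library.Poly_Mapping"
begin

text \<open>Commutative real polynomials in the variables x_0, x_1, x_2, ...:
  a monomial is an exponent map, a polynomial a finitely supported
  map from monomials to coefficients (with the convolution product of Poly_Mapping).\<close>
type_synonym cpoly = "(nat \<Rightarrow>\<^sub>0 nat) \<Rightarrow>\<^sub>0 real"

definition cvar :: "nat \<Rightarrow> cpoly" where
  "cvar i = Poly_Mapping.single (Poly_Mapping.single i 1) 1"

definition coeff :: "cpoly \<Rightarrow> (nat \<Rightarrow>\<^sub>0 nat) \<Rightarrow> real" where
  "coeff q m = Poly_Mapping.lookup q m"

definition mon_deg :: "(nat \<Rightarrow>\<^sub>0 nat) \<Rightarrow> nat" where
  "mon_deg m = (\<Sum>v\<in>Poly_Mapping.keys m. Poly_Mapping.lookup m v)"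

definition homogeneous :: "cpoly \<Rightarrow> bool" where
  "homogeneous q \<longleftrightarrow> (\<exists>e. \<forall>m\<in>Poly_Mapping.keys q. mon_deg m = e)"

text \<open>Noncommutative polynomials in two letters: words over bool
  (True = letter X, False = letter Y), finitely supported real coefficients.\<close>
type_synonym ncpoly = "bool list \<Rightarrow>\<^sub>0 real"

definition nc_degree :: "ncpoly \<Rightarrow> nat" where
  "nc_degree p = Max (insert 0 (length ` Poly_Mapping.keys p))"

definition phi :: "ncpoly \<Rightarrow> nat \<Rightarrow> nat \<Rightarrow> real" where
  "phi p i j = (\<Sum>w\<in>{w\<in>Poly_Mapping.keys p. length (filter id w) = i \<and> length (filter Not w) = j}. Poly_Mapping.lookup p w)"

text \<open>k x k matrices with polynomial entries, represented as functions on indices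
  below k.\<close>
type_synonym cmat = "nat \<Rightarrow> nat \<Rightarrow> cpoly"

definition mat_one :: "nat \<Rightarrow> cmat" where
  "mat_one k = (\<lambda>r s. if r = s then 1 else 0)"

definition mat_mult :: "nat \<Rightarrow> cmat \<Rightarrow> cmat \<Rightarrow> cmat" where
  "mat_mult k A B = (\<lambda>r s. \<Sum>t<k. A r t * B t s)"

fun word_eval :: "nat \<Rightarrow> cmat \<Rightarrow> cmat \<Rightarrow> bool list \<Rightarrow> cmat" where
  "word_eval k X Y [] = mat_one k"
| "word_eval k X Y (c # w) = mat_mult k (if c then X else Y) (word_eval k X Y w)"

definition nc_eval :: "nat \<Rightarrow> ncpoly \<Rightarrow> cmat \<Rightarrow> cmat \<Rightarrow> cmat" where
  "nc_eval k p X Y = (\<lambda>r s. \<Sum>w\<in>Poly_Mapping.keys p. Poly_Mapping.single 0 (Poly_Mapping.lookup p w) * word_eval k X Y w r s)"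

text \<open>The family P = (P 1, ..., P (k^2)) admits the nc representation p(X,Y),
  where X has entries x_(vx r s) and Y has entries x_(vy r s):
  the 2k^2 entries of X and Y are exactly the variables x_1..x_(2k^2), each once,
  and the entries of p(X,Y) are exactly P 1, ..., P (k^2), each once (via sigma).\<close>
definition nc_representation ::
  "nat \<Rightarrow> (nat \<Rightarrow> cpoly) \<Rightarrow> ncpoly \<Rightarrow> (nat \<Rightarrow> nat \<Rightarrow> nat) \<Rightarrow> (nat \<Rightarrow> nat \<Rightarrow> nat)
    \<Rightarrow> (nat \<times> nat \<Rightarrow> nat) \<Rightarrow> bool" where
  "nc_representation k P p vx vy \<sigma> \<longleftrightarrow>
     bij_betw (\<lambda>(b, r, s). if b then vx r s else vy r s)
       (UNIV \<times> {..<k} \<times> {..<k}) {1..2 * k^2}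
   \<and> bij_betw \<sigma> ({..<k} \<times> {..<k}) {1..k^2}
   \<and> (\<forall>r<k. \<forall>s<k. nc_eval k p (\<lambda>r s. cvar (vx r s)) (\<lambda>r s. cvar (vy r s)) r s = P (\<sigma> (r, s)))"

end

theory Submission
  imports Defs
begin

text \<open>Substituting the generic matrices, entry (r, s) of a word w(X, Y) is the sum, over index
  paths r = t_0, t_1, ..., t_|w| = s, of the product of the variables met along the path. Since all
  2k^2 variables are distinct, such a product has coefficient 1 and determines both the word and
  the path. The monomial x_aa^(n-1) x_ab arises only from X^n along a, ..., a, b, and
  x_ab x_bb^(n-1) only from X^n along a, b, ..., b (the mirror image under transposition and
  reversal of words). Hence both monomials occur in p(X, Y) with coefficient phi(n, 0), the
  coefficient of X^n in p, in entry (a, b) and nowhere else.\<close>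

abbreviation letter_var :: "(nat \<Rightarrow> nat \<Rightarrow> nat) \<Rightarrow> (nat \<Rightarrow> nat \<Rightarrow> nat) \<Rightarrow> bool \<Rightarrow> nat \<Rightarrow> nat \<Rightarrow> nat" where
  "letter_var vx vy c r s \<equiv> if c then vx r s else vy r s"

abbreviation generic_word :: "nat \<Rightarrow> (nat \<Rightarrow> nat \<Rightarrow> nat) \<Rightarrow> (nat \<Rightarrow> nat \<Rightarrow> nat) \<Rightarrow> bool list \<Rightarrow> cmat" where
  "generic_word k vx vy \<equiv> word_eval k (\<lambda>r s. cvar (vx r s)) (\<lambda>r s. cvar (vy r s))"

abbreviation distinct_variables :: "nat \<Rightarrow> (nat \<Rightarrow> nat \<Rightarrow> nat) \<Rightarrow> (nat \<Rightarrow> nat \<Rightarrow> nat) \<Rightarrow> bool" where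
  "distinct_variables k vx vy \<equiv> inj_on (\<lambda>(c, r, s). letter_var vx vy c r s) (UNIV \<times> {..<k} \<times> {..<k})"

lemma lookup_single_mult:
  fixes m M :: "'a::cancel_comm_monoid_add" and c :: "'b::semiring_0"
  shows "Poly_Mapping.lookup (Poly_Mapping.single m c * q) M =
    (if \<exists>q'. M = m + q' then c * Poly_Mapping.lookup q (M - m) else 0)"
proof -
  have "Poly_Mapping.lookup (Poly_Mapping.single m c * q) M
      = c * Sum_any (\<lambda>q'. Poly_Mapping.lookup q q' when M = m + q')"
    by (simp add: lookup_mult lookup_single when_mult)
  also have "\<dots> = (if \<exists>q'. M = m + q' then c * Poly_Mapping.lookup q (M - m) else 0)"
  proof (cases "\<exists>q'. M = m + q'")
    case True
    then obtain q0 where "M = m + q0" by blast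
    then have "(\<lambda>q'. Poly_Mapping.lookup q q' when M = m + q') = (\<lambda>q'. Poly_Mapping.lookup q q' when q' = q0)"
      by (auto simp: when_def)
    then show ?thesis using \<open>M = m + q0\<close> by simp
  qed (simp add: when_def)
  finally show ?thesis .
qed

lemma exists_add_single_one_iff:
  fixes M :: "'a \<Rightarrow>\<^sub>0 nat"
  shows "(\<exists>q. M = Poly_Mapping.single v 1 + q) \<longleftrightarrow> 1 \<le> Poly_Mapping.lookup M v"
proof
  assume "1 \<le> Poly_Mapping.lookup M v"
  then have "M = Poly_Mapping.single v 1 + (M - Poly_Mapping.single v 1)"
    by (intro poly_mapping_eqI) (auto simp: lookup_add lookup_minus lookup_single when_def)
  then show "\<exists>q. M = Poly_Mapping.single v 1 + q" by blast
qed (auto simp: lookup_add)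

lemma lookup_cvar_mult:
  "Poly_Mapping.lookup (cvar v * q) M =
    (if 1 \<le> Poly_Mapping.lookup M v then Poly_Mapping.lookup q (M - Poly_Mapping.single v 1) else 0)"
  unfolding cvar_def lookup_single_mult exists_add_single_one_iff by simp

lemma lookup_generic_word_Cons:
  "Poly_Mapping.lookup (generic_word k vx vy (c # w) r s) M =
   (\<Sum>t<k. if 1 \<le> Poly_Mapping.lookup M (letter_var vx vy c r t)
      then Poly_Mapping.lookup (generic_word k vx vy w t s) (M - Poly_Mapping.single (letter_var vx vy c r t) 1)
      else 0)"
proof -
  have "generic_word k vx vy (c # w) r s = (\<Sum>t<k. cvar (letter_var vx vy c r t) * generic_word k vx vy w t s)"
    by (cases c) (simp_all add: mat_mult_def)
  then show ?thesis by (simp only: lookup_sum lookup_cvar_mult)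
qed

lemma mat_mult_one_left: "r < k \<Longrightarrow> mat_mult k (mat_one k) A r s = A r s"
proof -
  have "mat_mult k (mat_one k) A r s = (\<Sum>t<k. if r = t then A t s else 0)"
    unfolding mat_mult_def mat_one_def by (rule sum.cong) auto
  then show "r < k \<Longrightarrow> ?thesis" by simp
qed

lemma mat_mult_one_right: "s < k \<Longrightarrow> mat_mult k A (mat_one k) r s = A r s"
proof -
  have "mat_mult k A (mat_one k) r s = (\<Sum>t<k. if t = s then A r t else 0)"
    unfolding mat_mult_def mat_one_def by (rule sum.cong) auto
  then show "s < k \<Longrightarrow> ?thesis" by simp
qed

lemma word_eval_snoc:
  fixes X Y :: cmat
  assumes "r < k" "s < k"
  shows "word_eval k X Y (w @ [c]) r s = (\<Sum>t<k. word_eval k X Y w r t * (if c then X else Y) t s)"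
  using assms(1)
proof (induction w arbitrary: r)
  case Nil
  then show ?case using assms(2) by (simp add: mat_mult_one_right mat_mult_one_left[unfolded mat_mult_def])
next
  case (Cons c' w)
  let ?A = "if c' then X else Y" and ?C = "if c then X else Y"
  have "word_eval k X Y ((c' # w) @ [c]) r s = (\<Sum>u<k. ?A r u * (\<Sum>t<k. word_eval k X Y w u t * ?C t s))"
    using Cons.IH by (simp add: mat_mult_def)
  also have "\<dots> = (\<Sum>t<k. (\<Sum>u<k. ?A r u * word_eval k X Y w u t) * ?C t s)"
    unfolding sum_distrib_left sum_distrib_right mult.assoc by (rule sum.swap)
  finally show ?case by (simp add: mat_mult_def)
qed

lemma word_eval_rev_transpose:
  fixes X Y :: cmat
  assumes "r < k" "s < k"
  shows "word_eval k (\<lambda>r s. X s r) (\<lambda>r s. Y s r) (rev w) r s = word_eval k X Y w s r"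
  using assms
proof (induction w arbitrary: s)
  case Nil
  then show ?case by (simp add: mat_one_def)
next
  case (Cons c w)
  then show ?case by (simp add: word_eval_snoc mat_mult_def mult.commute)
qed

lemma single_eq_zero_iff: "Poly_Mapping.single k v = 0 \<longleftrightarrow> v = 0"
  by (metis lookup_single_eq lookup_zero single_zero)

lemma single_minus_single:
  "Poly_Mapping.single k (m::nat) - Poly_Mapping.single k n = Poly_Mapping.single k (m - n)"
  by (rule poly_mapping_eqI) (simp add: lookup_minus lookup_single when_def)

lemma single_add_single_minus_single:
  "u \<noteq> v \<Longrightarrow> Poly_Mapping.single u m + Poly_Mapping.single v n - Poly_Mapping.single u (i::nat)
    = Poly_Mapping.single u (m - i) + Poly_Mapping.single v n"
  by (rule poly_mapping_eqI) (auto simp: lookup_minus lookup_add lookup_single when_def)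

lemma letter_var_eq_iff:
  assumes "distinct_variables k vx vy" "r < k" "t < k" "a < k" "b < k"
  shows "letter_var vx vy c r t = vx a b \<longleftrightarrow> c \<and> r = a \<and> t = b"
  using inj_onD[OF assms(1), of "(c, r, t)" "(True, a, b)"] assms(2-) by auto

lemma lookup_generic_word_diag_power:
  assumes inj: "distinct_variables k vx vy" and c: "c < k" and "r < k" "s < k"
  shows "Poly_Mapping.lookup (generic_word k vx vy w r s) (Poly_Mapping.single (vx c c) e) =
    (if w = replicate e True \<and> r = s \<and> (0 < e \<longrightarrow> r = c) then 1 else 0)"
  using assms(3)
proof (induction w arbitrary: r e)
  case Nil
  then show ?case by (auto simp: mat_one_def lookup_one when_def single_eq_zero_iff)
next
  case (Cons c' w)
  have "(if 1 \<le> Poly_Mapping.lookup (Poly_Mapping.single (vx c c) e) (letter_var vx vy c' r t)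
      then Poly_Mapping.lookup (generic_word k vx vy w t s)
        (Poly_Mapping.single (vx c c) e - Poly_Mapping.single (letter_var vx vy c' r t) 1) else 0)
    = (if t = c then (if c' \<and> r = c \<and> 1 \<le> e
        then Poly_Mapping.lookup (generic_word k vx vy w c s) (Poly_Mapping.single (vx c c) (e - 1)) else 0)
       else 0)" if "t < k" for t
  proof (cases "c' \<and> r = c \<and> t = c")
    case False
    then have "letter_var vx vy c' r t \<noteq> vx c c"
      using letter_var_eq_iff[OF inj Cons.prems that c c] by blast
    then show ?thesis using False by (simp add: lookup_single_not_eq)
  qed (simp add: single_minus_single)
  then have "Poly_Mapping.lookup (generic_word k vx vy (c' # w) r s) (Poly_Mapping.single (vx c c) e)
      = (if c' \<and> r = c \<and> 1 \<le> e
          then Poly_Mapping.lookup (generic_word k vx vy w c s) (Poly_Mapping.single (vx c c) (e - 1)) else 0)"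
    unfolding lookup_generic_word_Cons using c by simp
  also have "\<dots> = (if c' # w = replicate e True \<and> r = s \<and> (0 < e \<longrightarrow> r = c) then 1 else 0)"
    using Cons.IH[OF c, of "e - 1"] Cons.prems by (cases e) auto
  finally show ?case .
qed

lemma lookup_generic_word_Cons_diag_power_times_var:
  assumes inj: "distinct_variables k vx vy" and ab: "a < k" "b < k" "a \<noteq> b" and r: "r < k"
  defines "M e \<equiv> Poly_Mapping.single (vx a a) e + Poly_Mapping.single (vx a b) 1"
  shows "Poly_Mapping.lookup (generic_word k vx vy (c # w) r s) (M e)
    = (if c \<and> r = a \<and> 1 \<le> e then Poly_Mapping.lookup (generic_word k vx vy w a s) (M (e - 1)) else 0)
      + (if c \<and> r = a then Poly_Mapping.lookup (generic_word k vx vy w b s) (Poly_Mapping.single (vx a a) e)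
         else 0)"
proof -
  let ?W = "generic_word k vx vy w"
  have ne: "vx a a \<noteq> vx a b"
    using letter_var_eq_iff[OF inj ab(1,1,1,2), of True] ab(3) by simp
  have "(if 1 \<le> Poly_Mapping.lookup (M e) (letter_var vx vy c r t)
      then Poly_Mapping.lookup (?W t s) (M e - Poly_Mapping.single (letter_var vx vy c r t) 1) else 0)
    = (if t = a then (if c \<and> r = a \<and> 1 \<le> e then Poly_Mapping.lookup (?W a s) (M (e - 1)) else 0) else 0)
      + (if t = b then (if c \<and> r = a
          then Poly_Mapping.lookup (?W b s) (Poly_Mapping.single (vx a a) e) else 0) else 0)"
    if t: "t < k" for t
  proof -
    consider "c \<and> r = a \<and> t = a" | "c \<and> r = a \<and> t = b"
      | "letter_var vx vy c r t \<noteq> vx a a" "letter_var vx vy c r t \<noteq> vx a b"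
        "\<not> (c \<and> r = a \<and> t = a)" "\<not> (c \<and> r = a \<and> t = b)"
      using letter_var_eq_iff[OF inj r t ab(1,1)] letter_var_eq_iff[OF inj r t ab(1,2)] by blast
    then show ?thesis
    proof cases
      case 1
      then show ?thesis
        using ne ab(3) by (simp add: M_def lookup_add lookup_single_not_eq single_add_single_minus_single)
    next
      case 2
      then show ?thesis
        using single_add_single_minus_single[OF ne[symmetric], of 1 e 1] ne ab(3)
        by (simp add: M_def lookup_add lookup_single_not_eq add.commute)
    next
      case 3
      then show ?thesis by (auto simp: M_def lookup_add lookup_single_not_eq)
    qed
  qed
  then show ?thesis
    unfolding lookup_generic_word_Cons using ab by (simp add: sum.distrib)
qed

lemma lookup_generic_word_diag_power_times_var:
  assumes inj: "distinct_variables k vx vy" and ab: "a < k" "b < k" "a \<noteq> b" and "r < k" "s < k"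
  shows "Poly_Mapping.lookup (generic_word k vx vy w r s)
      (Poly_Mapping.single (vx a a) e + Poly_Mapping.single (vx a b) 1)
    = (if w = replicate (Suc e) True \<and> r = a \<and> s = b then 1 else 0)"
  using assms(5)
proof (induction w arbitrary: r e)
  case Nil
  have "Poly_Mapping.single (vx a a) e + Poly_Mapping.single (vx a b) 1 \<noteq> 0"
    by (metis add_is_0 lookup_add lookup_single_eq lookup_zero one_neq_zero)
  then show ?case by (auto simp: mat_one_def lookup_one when_def)
next
  case (Cons c w)
  then show ?case
    using lookup_generic_word_Cons_diag_power_times_var[OF inj ab Cons.prems, of c w s e]
      Cons.IH[of a "e - 1"] lookup_generic_word_diag_power[OF inj ab(1,2) \<open>s < k\<close>, of w e] ab
    by (cases e) auto
qed

lemma lookup_generic_word_var_times_diag_power: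
  assumes inj: "distinct_variables k vx vy" and ab: "a < k" "b < k" "a \<noteq> b" and rs: "r < k" "s < k"
  shows "Poly_Mapping.lookup (generic_word k vx vy w r s)
      (Poly_Mapping.single (vx a b) 1 + Poly_Mapping.single (vx b b) e)
    = (if w = replicate (Suc e) True \<and> r = a \<and> s = b then 1 else 0)"
proof -
  let ?vx = "\<lambda>r s. vx s r" and ?vy = "\<lambda>r s. vy s r"
  have inj': "distinct_variables k ?vx ?vy"
    using inj by (fastforce simp: inj_on_def)
  have "generic_word k vx vy w r s = generic_word k ?vx ?vy (rev w) s r"
    using word_eval_rev_transpose[OF rs(2,1)] by simp
  then have "Poly_Mapping.lookup (generic_word k vx vy w r s)
      (Poly_Mapping.single (vx a b) 1 + Poly_Mapping.single (vx b b) e)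
    = Poly_Mapping.lookup (generic_word k ?vx ?vy (rev w) s r)
      (Poly_Mapping.single (?vx b b) e + Poly_Mapping.single (?vx b a) 1)"
    by (simp add: add.commute)
  also have "\<dots> = (if rev w = replicate (Suc e) True \<and> s = b \<and> r = a then 1 else 0)"
    using lookup_generic_word_diag_power_times_var[OF inj' ab(2,1) ab(3)[symmetric] rs(2,1)] .
  finally show ?thesis by (simp only: rev_swap rev_replicate conj_ac)
qed

lemma phi_zero_eq_lookup_replicate: "phi p n 0 = Poly_Mapping.lookup p (replicate n True)"
proof -
  have "length (filter id w) = n \<and> length (filter Not w) = 0 \<longleftrightarrow> w = replicate n True" for w
  proof
    assume counts: "length (filter id w) = n \<and> length (filter Not w) = 0"
    then have "\<forall>x\<in>set w. x" by (auto simp: filter_empty_conv)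
    moreover from this have "length w = n" using counts by (simp add: filter_id_conv)
    ultimately show "w = replicate n True" by (metis replicate_length_same)
  qed simp
  then have words: "{w \<in> Poly_Mapping.keys p. length (filter id w) = n \<and> length (filter Not w) = 0}
      = Poly_Mapping.keys p \<inter> {replicate n True}"
    by blast
  then show ?thesis
    unfolding phi_def words
    by (cases "replicate n True \<in> Poly_Mapping.keys p") (simp_all add: not_in_keys_iff_lookup_eq_zero)
qed

lemma lookup_nc_eval_single_word:
  assumes "\<And>w. Poly_Mapping.lookup (word_eval k X Y w r s) M = (if w = w0 \<and> r = a \<and> s = b then 1 else 0)"
  shows "Poly_Mapping.lookup (nc_eval k p X Y r s) M = (if r = a \<and> s = b then Poly_Mapping.lookup p w0 else 0)"
proof -
  have "Poly_Mapping.lookup (nc_eval k p X Y r s) M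
      = (\<Sum>w\<in>Poly_Mapping.keys p. if r = a \<and> s = b then (if w = w0 then Poly_Mapping.lookup p w else 0) else 0)"
    unfolding nc_eval_def lookup_sum lookup_single_mult by (intro sum.cong) (auto simp: assms)
  also have "\<dots> = (if r = a \<and> s = b then Poly_Mapping.lookup p w0 else 0)"
    by (auto simp: not_in_keys_iff_lookup_eq_zero)
  finally show ?thesis .
qed

lemma coeff_represented_entry:
  assumes rep: "nc_representation k P p vx vy \<sigma>" and "r < k" "s < k"
    and "\<And>w. Poly_Mapping.lookup (generic_word k vx vy w r s) M
      = (if w = replicate n True \<and> r = a \<and> s = b then 1 else 0)"
  shows "coeff (P (\<sigma> (r, s))) M = (if r = a \<and> s = b then phi p n 0 else 0)"
proof -
  have "P (\<sigma> (r, s)) = nc_eval k p (\<lambda>r s. cvar (vx r s)) (\<lambda>r s. cvar (vy r s)) r s"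
    using rep \<open>r < k\<close> \<open>s < k\<close> unfolding nc_representation_def by simp
  then show ?thesis
    unfolding coeff_def phi_zero_eq_lookup_replicate by (simp add: lookup_nc_eval_single_word assms(4))
qed

lemma unique_entry_with_coeff:
  assumes \<sigma>: "bij_betw \<sigma> ({..<k} \<times> {..<k}) {1..k^2}" and "a < k" "b < k" "c \<noteq> 0"
    and coeff: "\<And>r s. r < k \<Longrightarrow> s < k \<Longrightarrow> coeff (P (\<sigma> (r, s))) M = (if r = a \<and> s = b then c else 0)"
  shows "m \<in> {1..k^2} \<Longrightarrow> coeff (P m) M = c \<Longrightarrow> m = \<sigma> (a, b)"
proof -
  assume "m \<in> {1..k^2}" "coeff (P m) M = c"
  moreover have "m \<in> \<sigma> ` ({..<k} \<times> {..<k})"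
    using \<sigma> \<open>m \<in> {1..k^2}\<close> by (simp add: bij_betw_def)
  then obtain r s where "r < k" "s < k" "m = \<sigma> (r, s)" by auto
  ultimately show "m = \<sigma> (a, b)" using coeff \<open>c \<noteq> 0\<close> by (auto split: if_splits)
qed

theorem lemma4p2:
  fixes k d n a b i j l :: nat
    and P :: "nat \<Rightarrow> cpoly" and p :: ncpoly
    and vx vy :: "nat \<Rightarrow> nat \<Rightarrow> nat" and \<sigma> :: "nat \<times> nat \<Rightarrow> nat"
  assumes "k \<ge> 2"
    and "\<forall>m\<in>{1..k^2}. homogeneous (P m)"
    and "nc_representation k P p vx vy \<sigma>"
    and "nc_degree p = d" and "d > 1"
    and "a < k" and "b < k" and "a \<noteq> b"
    and "vx a a = i" and "vx a b = j" and "vx b b = l"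
    and "n \<ge> 2" and "phi p n 0 \<noteq> 0"
  shows "(\<exists>!m. m \<in> {1..k^2}
            \<and> coeff (P m) (Poly_Mapping.single i (n - 1) + Poly_Mapping.single j 1) = phi p n 0
            \<and> coeff (P m) (Poly_Mapping.single j 1 + Poly_Mapping.single l (n - 1)) = phi p n 0)
       \<and> coeff (P (\<sigma> (a, b))) (Poly_Mapping.single i (n - 1) + Poly_Mapping.single j 1) = phi p n 0
       \<and> coeff (P (\<sigma> (a, b))) (Poly_Mapping.single j 1 + Poly_Mapping.single l (n - 1)) = phi p n 0"
proof -
  have rep: "nc_representation k P p vx vy \<sigma>" and ab: "a < k" "b < k" "a \<noteq> b" by fact+
  have inj: "distinct_variables k vx vy" and \<sigma>: "bij_betw \<sigma> ({..<k} \<times> {..<k}) {1..k^2}"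
    using rep unfolding nc_representation_def by (auto dest: bij_betw_imp_inj_on)
  have n: "Suc (n - 1) = n" using \<open>n \<ge> 2\<close> by simp
  define M1 where "M1 = Poly_Mapping.single i (n - 1) + Poly_Mapping.single j 1"
  define M2 where "M2 = Poly_Mapping.single j 1 + Poly_Mapping.single l (n - 1)"
  have coeff1: "coeff (P (\<sigma> (r, s))) M1 = (if r = a \<and> s = b then phi p n 0 else 0)" if "r < k" "s < k" for r s
    by (rule coeff_represented_entry[OF rep that])
      (use lookup_generic_word_diag_power_times_var[OF inj ab that, of _ "n - 1"]
        in \<open>simp only: M1_def n assms(9,10)\<close>)
  have coeff2: "coeff (P (\<sigma> (r, s))) M2 = (if r = a \<and> s = b then phi p n 0 else 0)" if "r < k" "s < k" for r s
    by (rule coeff_represented_entry[OF rep that])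
      (use lookup_generic_word_var_times_diag_power[OF inj ab that, of _ "n - 1"]
        in \<open>simp only: M2_def n assms(10,11)\<close>)
  have at_ab: "coeff (P (\<sigma> (a, b))) M1 = phi p n 0" "coeff (P (\<sigma> (a, b))) M2 = phi p n 0"
    using coeff1[OF ab(1,2)] coeff2[OF ab(1,2)] by simp_all
  moreover have "\<sigma> (a, b) \<in> {1..k^2}"
    using \<sigma> ab by (auto dest: bij_betw_apply)
  ultimately show ?thesis
    unfolding M1_def[symmetric] M2_def[symmetric]
    using unique_entry_with_coeff[OF \<sigma> ab(1,2) \<open>phi p n 0 \<noteq> 0\<close> coeff1] by blast
qed

end
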